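(* Let $(\Omega,\Sigma,\mathbb{P})$ be a probability space and let $X$ be an ideal of $L_0(\Sigma)$ which contains the constant functions and admits a strictly positive order continuous linear functional. Let $f\in X$ with $f\ge0$ and $\sigma(f)=\Sigma$, and let $O_f=\operatorname{span}\{\mathbb 1,(f-k)^+:k\in\mathbb{R}\}$. Then: (a) the closure of $O_f$ in the $\sigma(X,X_n^\sim)$-topology equals $X$; (b) for every $g\in X$ there exists a sequence $(g_n)$ in $O_f$ such that $g_n\to g$ almost everywhere.
   Context: $L_0(\Sigma)$ is the vector lattice of real-valued measurable functions modulo a.e. equality with the a.e. order; an ideal is a subspace $X$ with $|x|\le|y|$, $y\in X$ implying $x\in X$. $\mathbb 1$ is the constant one function. A net $x_\alpha$ converges in order to $x$ in $X$ if there is a net $z_\beta\downarrow 0$ in $X$ such that for every $\beta$ there is $\alpha_0$ with $|x_\alpha-x|\le z_\beta$ for $\alpha\ge\alpha_0$. A linear functional $\phi$ on $X$ is order continuous if $\phi(x_\alpha)\to 0$ whenever $x_\alpha\to 0$ in order in $X$; it is strictly positive if $\phi(x)>0$ whenever $x\ge0$, $x\ne0$. $X_n^\sim$ is the space of order continuous linear functionals on $X$, and $\sigma(X,X_n^\sim)$ is the weak topology on $X$ induced by $X_n^\sim$. $\sigma(f)$ is the smallest sub-$\sigma$-algebra of $\Sigma$ making $f$ measurable and containing all $\mathbb{P}$-null sets (so the hypothesis $\sigma(f)=\Sigma$ is meant in this sense). *)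

theory Defs
  imports "HOL-Probability.Probability"
begin

text \<open>Elements of L_0 are represented by real-valued Borel measurable functions on the
  sample space; all order relations and equalities are taken almost everywhere.\<close>

definition is_ideal_L0 :: "'a measure \<Rightarrow> ('a \<Rightarrow> real) set \<Rightarrow> bool" where
  "is_ideal_L0 M X \<longleftrightarrow>
     X \<subseteq> borel_measurable M \<and>
     (\<lambda>_. 0) \<in> X \<and>
     (\<forall>x\<in>X. \<forall>y\<in>X. (\<lambda>\<omega>. x \<omega> + y \<omega>) \<in> X) \<and>
     (\<forall>c::real. \<forall>x\<in>X. (\<lambda>\<omega>. c * x \<omega>) \<in> X) \<and>
     (\<forall>x y. y \<in> X \<longrightarrow> x \<in> borel_measurable M \<longrightarrow>
        (AE \<omega> in M. \<bar>x \<omega>\<bar> \<le> \<bar>y \<omega>\<bar>) \<longrightarrow> x \<in> X)"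

text \<open>A net is represented by its (eventuality) filter F on X;
  the dominating net z_beta decreasing to 0 is represented by its range D, a nonempty
  downward directed subset of X with infimum 0 in X.\<close>

definition order_conv :: "'a measure \<Rightarrow> ('a \<Rightarrow> real) set \<Rightarrow> ('a \<Rightarrow> real) filter \<Rightarrow> ('a \<Rightarrow> real) \<Rightarrow> bool" where
  "order_conv M X F x \<longleftrightarrow>
     (\<exists>D. D \<subseteq> X \<and> D \<noteq> {} \<and>
        (\<forall>z1\<in>D. \<forall>z2\<in>D. \<exists>z3\<in>D. (AE \<omega> in M. z3 \<omega> \<le> z1 \<omega>) \<and> (AE \<omega> in M. z3 \<omega> \<le> z2 \<omega>)) \<and>
        (\<forall>z\<in>D. AE \<omega> in M. 0 \<le> z \<omega>) \<and>
        (\<forall>w\<in>X. (\<forall>z\<in>D. AE \<omega> in M. w \<omega> \<le> z \<omega>) \<longrightarrow> (AE \<omega> in M. w \<omega> \<le> 0)) \<and>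
        (\<forall>z\<in>D. eventually (\<lambda>y. AE \<omega> in M. \<bar>y \<omega> - x \<omega>\<bar> \<le> z \<omega>) F))"

definition linear_functional_on :: "'a measure \<Rightarrow> ('a \<Rightarrow> real) set \<Rightarrow> (('a \<Rightarrow> real) \<Rightarrow> real) \<Rightarrow> bool" where
  "linear_functional_on M X \<phi> \<longleftrightarrow>
     (\<forall>x\<in>X. \<forall>y\<in>X. (AE \<omega> in M. x \<omega> = y \<omega>) \<longrightarrow> \<phi> x = \<phi> y) \<and>
     (\<forall>x\<in>X. \<forall>y\<in>X. \<phi> (\<lambda>\<omega>. x \<omega> + y \<omega>) = \<phi> x + \<phi> y) \<and>
     (\<forall>c::real. \<forall>x\<in>X. \<phi> (\<lambda>\<omega>. c * x \<omega>) = c * \<phi> x)"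

definition order_continuous_functional :: "'a measure \<Rightarrow> ('a \<Rightarrow> real) set \<Rightarrow> (('a \<Rightarrow> real) \<Rightarrow> real) \<Rightarrow> bool" where
  "order_continuous_functional M X \<phi> \<longleftrightarrow>
     linear_functional_on M X \<phi> \<and>
     (\<forall>F. eventually (\<lambda>y. y \<in> X) F \<longrightarrow> order_conv M X F (\<lambda>_. 0) \<longrightarrow> (\<phi> \<longlongrightarrow> 0) F)"

definition strictly_positive_functional :: "'a measure \<Rightarrow> ('a \<Rightarrow> real) set \<Rightarrow> (('a \<Rightarrow> real) \<Rightarrow> real) \<Rightarrow> bool" where
  "strictly_positive_functional M X \<phi> \<longleftrightarrow>
     (\<forall>x\<in>X. (AE \<omega> in M. 0 \<le> x \<omega>) \<longrightarrow> \<not> (AE \<omega> in M. x \<omega> = 0) \<longrightarrow> \<phi> x > 0)"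

definition order_dual_n :: "'a measure \<Rightarrow> ('a \<Rightarrow> real) set \<Rightarrow> (('a \<Rightarrow> real) \<Rightarrow> real) set" where
  "order_dual_n M X = {\<phi>. order_continuous_functional M X \<phi>}"

definition weak_topology_n :: "'a measure \<Rightarrow> ('a \<Rightarrow> real) set \<Rightarrow> ('a \<Rightarrow> real) topology" where
  "weak_topology_n M X = topology_generated_by
     (insert X {{x \<in> X. \<phi> x \<in> U} | \<phi> U. \<phi> \<in> order_dual_n M X \<and> open U})"

definition sigma_gen_completed :: "'a measure \<Rightarrow> ('a \<Rightarrow> real) \<Rightarrow> 'a set set" where
  "sigma_gen_completed M f = sigma_sets (space M)
     ({f -` B \<inter> space M | B. B \<in> sets borel} \<union> null_sets M)"

definition O_gen :: "('a \<Rightarrow> real) \<Rightarrow> ('a \<Rightarrow> real) set" where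
  "O_gen f = insert (\<lambda>_. 1) {(\<lambda>\<omega>. max (f \<omega> - k) 0) | k. True}"

definition O_span :: "('a \<Rightarrow> real) \<Rightarrow> ('a \<Rightarrow> real) set" where
  "O_span f = {(\<lambda>\<omega>. \<Sum>g\<in>S. c g * g \<omega>) | S c. finite S \<and> S \<subseteq> O_gen f}"

end

theory Submission
  imports Defs
begin

(* Call Q \<subseteq> X closed if it contains O_f, is a linear subspace and contains every a.e. limit
   of a sequence in Q that is dominated by an element of X. Such a Q contains all of X: the
   ramps 1 - n(f - a)^+ + n(f - a - 1/n)^+ in O_f converge boundedly to the indicator of
   {f \<le> a}; these sublevel sets and the null sets form an \<inter>-stable generator of \<Sigma> = \<sigma>(f),
   so by Dynkin's argument Q contains all indicators, hence all simple functions, hence X.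
   Both the \<sigma>(X, X_n~)-closure of O_f and its closure for the metric \<integral> min(1, |u - v|) of
   convergence in measure are closed: an order continuous functional is sequentially
   continuous along dominated a.e. convergent sequences (the tail suprema form the
   dominating net), and the metric is controlled by dominated convergence. Finally, u_n \<in> O_f
   with \<integral> min(1, |u_n - g|) < 2^-n converge to g a.e. by Borel-Cantelli. *)

lemma O_span_const_one: "(\<lambda>_. 1) \<in> O_span f"
  unfolding O_span_def O_gen_def
  by (rule CollectI, rule exI[of _ "{\<lambda>_. 1}"], rule exI[of _ "\<lambda>_. 1"]) auto

lemma O_span_positive_part: "(\<lambda>\<omega>. max (f \<omega> - k) 0) \<in> O_span f"
  unfolding O_span_def O_gen_def
  by (rule CollectI, rule exI[of _ "{\<lambda>\<omega>. max (f \<omega> - k) 0}"], rule exI[of _ "\<lambda>_. 1"]) auto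

lemma O_span_scale:
  assumes "u \<in> O_span f"
  shows "(\<lambda>\<omega>. a * u \<omega>) \<in> O_span f"
proof -
  from assms obtain S c where u: "u = (\<lambda>\<omega>. \<Sum>g\<in>S. c g * g \<omega>)" "finite S" "S \<subseteq> O_gen f"
    unfolding O_span_def by blast
  have "(\<lambda>\<omega>. a * u \<omega>) = (\<lambda>\<omega>. \<Sum>g\<in>S. (a * c g) * g \<omega>)"
    by (simp add: u sum_distrib_left mult.assoc)
  with u(2,3) show ?thesis
    unfolding O_span_def by (intro CollectI exI[of _ S] exI[of _ "\<lambda>g. a * c g"]) simp
qed

lemma O_span_add:
  assumes "u \<in> O_span f" "v \<in> O_span f"
  shows "(\<lambda>\<omega>. u \<omega> + v \<omega>) \<in> O_span f"
proof -
  from assms(1) obtain S c where u: "u = (\<lambda>\<omega>. \<Sum>g\<in>S. c g * g \<omega>)" "finite S" "S \<subseteq> O_gen f"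
    unfolding O_span_def by blast
  from assms(2) obtain T d where v: "v = (\<lambda>\<omega>. \<Sum>g\<in>T. d g * g \<omega>)" "finite T" "T \<subseteq> O_gen f"
    unfolding O_span_def by blast
  have extend: "(\<Sum>g\<in>S \<union> T. (if g \<in> R then e g else 0) * g \<omega>) = (\<Sum>g\<in>R. e g * g \<omega>)"
    if "R \<in> {S, T}" for R e \<omega>
    using that u(2) v(2) by (intro sum.mono_neutral_cong_right) auto
  let ?cd = "\<lambda>g. (if g \<in> S then c g else 0) + (if g \<in> T then d g else 0)"
  have "(\<lambda>\<omega>. u \<omega> + v \<omega>) = (\<lambda>\<omega>. \<Sum>g\<in>S \<union> T. ?cd g * g \<omega>)"
    unfolding distrib_right sum.distrib u v using extend by simp
  with u(2,3) v(2,3) show ?thesis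
    unfolding O_span_def by (intro CollectI exI[of _ "S \<union> T"] exI[of _ ?cd]) simp
qed

lemma O_span_zero: "(\<lambda>_. 0) \<in> O_span f"
  using O_span_scale[OF O_span_const_one, of 0 f] by simp

context
  fixes M :: "'a measure" and X :: "('a \<Rightarrow> real) set"
  assumes ideal: "is_ideal_L0 M X"
begin

lemma ideal_measurable: "x \<in> X \<Longrightarrow> x \<in> borel_measurable M"
  using ideal unfolding is_ideal_L0_def by blast

lemma ideal_zero: "(\<lambda>_. 0) \<in> X"
  using ideal unfolding is_ideal_L0_def by blast

lemma ideal_add: "x \<in> X \<Longrightarrow> y \<in> X \<Longrightarrow> (\<lambda>\<omega>. x \<omega> + y \<omega>) \<in> X"
  using ideal unfolding is_ideal_L0_def by blast

lemma ideal_scale: "x \<in> X \<Longrightarrow> (\<lambda>\<omega>. c * x \<omega>) \<in> X"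
  using ideal unfolding is_ideal_L0_def by blast

lemma ideal_dominated:
  "y \<in> X \<Longrightarrow> x \<in> borel_measurable M \<Longrightarrow> (AE \<omega> in M. \<bar>x \<omega>\<bar> \<le> \<bar>y \<omega>\<bar>) \<Longrightarrow> x \<in> X"
  using ideal unfolding is_ideal_L0_def by blast

lemma ideal_diff: "x \<in> X \<Longrightarrow> y \<in> X \<Longrightarrow> (\<lambda>\<omega>. x \<omega> - y \<omega>) \<in> X"
  using ideal_add[of x "\<lambda>\<omega>. (-1) * y \<omega>"] ideal_scale[of y "-1"] by simp

lemma ideal_sum: "finite I \<Longrightarrow> (\<And>i. i \<in> I \<Longrightarrow> u i \<in> X) \<Longrightarrow> (\<lambda>\<omega>. \<Sum>i\<in>I. u i \<omega>) \<in> X"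
proof (induction I rule: finite_induct)
  case empty
  then show ?case using ideal_zero by simp
next
  case (insert i I)
  then show ?case using ideal_add[of "u i" "\<lambda>\<omega>. \<Sum>i\<in>I. u i \<omega>"] by simp
qed

lemma O_span_subset_ideal:
  assumes const: "\<forall>c. (\<lambda>_. c) \<in> X" and f: "f \<in> X"
  shows "O_span f \<subseteq> X"
proof
  have [measurable]: "f \<in> borel_measurable M"
    using f by (rule ideal_measurable)
  have gen: "g \<in> X" if "g \<in> O_gen f" for g
  proof -
    have "(\<lambda>\<omega>. max (f \<omega> - k) 0) \<in> X" for k
    proof (rule ideal_dominated)
      show "(\<lambda>\<omega>. \<bar>f \<omega>\<bar> + \<bar>k\<bar>) \<in> X"
        using ideal_add[OF ideal_dominated[OF f] const[rule_format, of "\<bar>k\<bar>"]] by auto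
    qed auto
    with that const show ?thesis
      unfolding O_gen_def by auto
  qed
  fix u assume "u \<in> O_span f"
  then obtain S c where u: "u = (\<lambda>\<omega>. \<Sum>g\<in>S. c g * g \<omega>)" "finite S" "S \<subseteq> O_gen f"
    unfolding O_span_def by blast
  show "u \<in> X"
    unfolding u(1) using u(2,3) gen by (intro ideal_sum ideal_scale) auto
qed

end

definition truncated_tail_sup :: "real \<Rightarrow> (nat \<Rightarrow> real) \<Rightarrow> nat \<Rightarrow> real" where
  "truncated_tail_sup b y k = (SUP n\<in>{k..}. min b \<bar>y n\<bar>)"

lemma bdd_above_image_min_abs: "bdd_above ((\<lambda>n. min b \<bar>y n\<bar>) ` A)" for b :: real
  by (rule bdd_aboveI2[of _ _ b]) simp

lemma truncated_tail_sup_upper: "k \<le> n \<Longrightarrow> min b \<bar>y n\<bar> \<le> truncated_tail_sup b y k"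
  unfolding truncated_tail_sup_def by (rule cSUP_upper[OF _ bdd_above_image_min_abs]) simp

lemma truncated_tail_sup_le_bound: "truncated_tail_sup b y k \<le> b"
  unfolding truncated_tail_sup_def by (auto intro!: cSUP_least)

lemma truncated_tail_sup_nonneg: "0 \<le> b \<Longrightarrow> 0 \<le> truncated_tail_sup b y k"
  using truncated_tail_sup_upper[of k k b y] by simp

lemma truncated_tail_sup_antimono: "k \<le> k' \<Longrightarrow> truncated_tail_sup b y k' \<le> truncated_tail_sup b y k"
  unfolding truncated_tail_sup_def by (intro cSUP_subset_mono bdd_above_image_min_abs) auto

lemma truncated_tail_sup_eventually_le:
  assumes "y \<longlonglongrightarrow> 0" and "0 < e"
  shows "\<exists>k. truncated_tail_sup b y k \<le> e"
proof -
  from assms obtain k where "\<And>n. n \<ge> k \<Longrightarrow> \<bar>y n\<bar> < e"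
    unfolding LIMSEQ_iff by auto
  then have "truncated_tail_sup b y k \<le> e"
    unfolding truncated_tail_sup_def by (auto intro!: cSUP_least intro: min.coboundedI2 less_imp_le)
  then show ?thesis ..
qed

lemma borel_measurable_truncated_tail_sup[measurable]:
  assumes [measurable]: "z \<in> borel_measurable M" "\<And>n. y n \<in> borel_measurable M"
  shows "(\<lambda>\<omega>. truncated_tail_sup (z \<omega>) (\<lambda>n. y n \<omega>) k) \<in> borel_measurable M"
  unfolding truncated_tail_sup_def by (intro borel_measurable_cSUP bdd_above_image_min_abs) auto

lemma decreasing_majorant_of_dominated_AE_null:
  assumes ideal: "is_ideal_L0 M X" and ys: "\<And>n. ys n \<in> X" and z: "z \<in> X"
    and dominated: "\<And>n. AE \<omega> in M. \<bar>ys n \<omega>\<bar> \<le> z \<omega>"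
    and lim: "AE \<omega> in M. (\<lambda>n. ys n \<omega>) \<longlonglongrightarrow> 0"
  obtains d where "\<And>k. d k \<in> X" and "\<And>k. AE \<omega> in M. 0 \<le> d k \<omega>"
    and "\<And>k k'. k \<le> k' \<Longrightarrow> AE \<omega> in M. d k' \<omega> \<le> d k \<omega>"
    and "\<And>k n. k \<le> n \<Longrightarrow> AE \<omega> in M. \<bar>ys n \<omega>\<bar> \<le> d k \<omega>"
    and "AE \<omega> in M. \<forall>e>0. \<exists>k. d k \<omega> \<le> e"
proof
  have [measurable]: "z \<in> borel_measurable M" "\<And>n. ys n \<in> borel_measurable M"
    using ideal_measurable[OF ideal] z ys by auto
  define d where "d k = (\<lambda>\<omega>. truncated_tail_sup (z \<omega>) (\<lambda>n. ys n \<omega>) k)" for k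
  have dominated_all: "AE \<omega> in M. \<forall>n. \<bar>ys n \<omega>\<bar> \<le> z \<omega>"
    using dominated by (simp add: AE_all_countable)
  then have d_bounds: "AE \<omega> in M. \<forall>k. 0 \<le> d k \<omega> \<and> d k \<omega> \<le> z \<omega>"
    by eventually_elim
      (auto simp: d_def intro: truncated_tail_sup_nonneg truncated_tail_sup_le_bound order_trans[OF abs_ge_zero])
  show "d k \<in> X" for k
  proof (rule ideal_dominated[OF ideal z])
    show "d k \<in> borel_measurable M"
      unfolding d_def by measurable
    show "AE \<omega> in M. \<bar>d k \<omega>\<bar> \<le> \<bar>z \<omega>\<bar>"
      using d_bounds by eventually_elim (metis abs_of_nonneg order_trans)
  qed
  show "AE \<omega> in M. 0 \<le> d k \<omega>" for k
    using d_bounds by eventually_elim simp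
  show "AE \<omega> in M. d k' \<omega> \<le> d k \<omega>" if "k \<le> k'" for k k'
    using that by (intro AE_I2) (simp add: d_def truncated_tail_sup_antimono)
  show "AE \<omega> in M. \<bar>ys n \<omega>\<bar> \<le> d k \<omega>" if "k \<le> n" for k n
    using dominated_all
  proof eventually_elim
    case (elim \<omega>)
    then have "min (z \<omega>) \<bar>ys n \<omega>\<bar> = \<bar>ys n \<omega>\<bar>"
      by (simp add: min_absorb2)
    with truncated_tail_sup_upper[OF that, of "z \<omega>" "\<lambda>n. ys n \<omega>"] show ?case
      by (simp add: d_def)
  qed
  show "AE \<omega> in M. \<forall>e>0. \<exists>k. d k \<omega> \<le> e"
    using lim by eventually_elim (simp add: d_def truncated_tail_sup_eventually_le)
qed

lemma order_conv_dominated_AE_tendsto_zero: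
  assumes ideal: "is_ideal_L0 M X" and ys: "\<And>n. ys n \<in> X" and z: "z \<in> X"
    and dominated: "\<And>n. AE \<omega> in M. \<bar>ys n \<omega>\<bar> \<le> z \<omega>"
    and lim: "AE \<omega> in M. (\<lambda>n. ys n \<omega>) \<longlonglongrightarrow> 0"
  shows "order_conv M X (filtermap ys sequentially) (\<lambda>_. 0)"
proof -
  obtain d where dX: "\<And>k. d k \<in> X" and d_nonneg: "\<And>k. AE \<omega> in M. 0 \<le> d k \<omega>"
    and d_antimono: "\<And>k k'. k \<le> k' \<Longrightarrow> AE \<omega> in M. d k' \<omega> \<le> d k \<omega>"
    and d_majorant: "\<And>k n. k \<le> n \<Longrightarrow> AE \<omega> in M. \<bar>ys n \<omega>\<bar> \<le> d k \<omega>"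
    and d_null: "AE \<omega> in M. \<forall>e>0. \<exists>k. d k \<omega> \<le> e"
    using decreasing_majorant_of_dominated_AE_null[OF assms] by blast
  show ?thesis
    unfolding order_conv_def
  proof (intro exI[of _ "range d"] conjI ballI impI)
    show "range d \<subseteq> X" "range d \<noteq> {}"
      using dX by auto
  next
    fix z1 z2 assume "z1 \<in> range d" "z2 \<in> range d"
    then obtain k1 k2 where "z1 = d k1" "z2 = d k2" by auto
    then show "\<exists>z3\<in>range d. (AE \<omega> in M. z3 \<omega> \<le> z1 \<omega>) \<and> (AE \<omega> in M. z3 \<omega> \<le> z2 \<omega>)"
      using d_antimono[of k1 "max k1 k2"] d_antimono[of k2 "max k1 k2"]
      by (intro bexI[of _ "d (max k1 k2)"]) auto
  next
    fix w assume "w \<in> range d"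
    then show "AE \<omega> in M. 0 \<le> w \<omega>"
      using d_nonneg by auto
  next
    fix w assume "w \<in> X" and "\<forall>v\<in>range d. AE \<omega> in M. w \<omega> \<le> v \<omega>"
    then have "AE \<omega> in M. \<forall>k. w \<omega> \<le> d k \<omega>"
      by (simp add: AE_all_countable)
    with d_null show "AE \<omega> in M. w \<omega> \<le> 0"
    proof eventually_elim
      case (elim \<omega>)
      show ?case
      proof (rule ccontr)
        assume "\<not> w \<omega> \<le> 0"
        then have "0 < w \<omega> / 2"
          by simp
        with elim(1) obtain k where "d k \<omega> \<le> w \<omega> / 2"
          by blast
        moreover have "w \<omega> \<le> d k \<omega>"
          using elim(2) by blast
        ultimately show False
          using \<open>\<not> w \<omega> \<le> 0\<close> by linarith
      qed
    qed
  next
    fix w assume "w \<in> range d"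
    then obtain k where w: "w = d k" by auto
    show "\<forall>\<^sub>F y in filtermap ys sequentially. AE \<omega> in M. \<bar>y \<omega> - 0\<bar> \<le> w \<omega>"
      unfolding w eventually_filtermap eventually_sequentially using d_majorant
      by (intro exI[of _ k]) simp
  qed
qed

lemma order_continuous_functional_tendsto_zero:
  assumes ideal: "is_ideal_L0 M X" and \<phi>: "order_continuous_functional M X \<phi>"
    and ys: "\<And>n. ys n \<in> X" and z: "z \<in> X"
    and dominated: "\<And>n. AE \<omega> in M. \<bar>ys n \<omega>\<bar> \<le> z \<omega>"
    and lim: "AE \<omega> in M. (\<lambda>n. ys n \<omega>) \<longlonglongrightarrow> 0"
  shows "(\<lambda>n. \<phi> (ys n)) \<longlonglongrightarrow> 0"
proof -
  have "\<forall>\<^sub>F y in filtermap ys sequentially. y \<in> X"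
    using ys by (simp add: eventually_filtermap)
  with \<phi> order_conv_dominated_AE_tendsto_zero[OF assms(1,3-6)]
  have "(\<phi> \<longlongrightarrow> 0) (filtermap ys sequentially)"
    unfolding order_continuous_functional_def by blast
  then show ?thesis
    by (simp add: filterlim_filtermap comp_def)
qed

definition ramp :: "real \<Rightarrow> real \<Rightarrow> real \<Rightarrow> real" where
  "ramp a s t = 1 + (- s) * max (t - a) 0 + s * max (t - (a + 1 / s)) 0"

lemma ramp_eq:
  assumes "0 < s"
  shows "ramp a s t = max 0 (min 1 (1 - s * (t - a)))"
proof -
  have scale_max: "s * max u 0 = max (s * u) 0" for u
    using assms by (simp add: max_def mult_le_0_iff)
  have "s * (t - (a + 1 / s)) = s * (t - a) - 1"
    using assms by (simp add: field_simps)
  with scale_max[of "t - a"] scale_max[of "t - (a + 1 / s)"] show ?thesis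
    unfolding ramp_def by (simp add: max_def min_def)
qed

lemma ramp_bounds: "0 < s \<Longrightarrow> 0 \<le> ramp a s t \<and> ramp a s t \<le> 1"
  by (simp add: ramp_eq)

lemma ramp_in_O_span: "(\<lambda>\<omega>. ramp a s (f \<omega>)) \<in> O_span f"
  unfolding ramp_def by (intro O_span_add O_span_scale O_span_positive_part O_span_const_one)

lemma ramp_tendsto_indicator:
  "(\<lambda>n. ramp a (Suc n) t) \<longlonglongrightarrow> (if t \<le> a then 1 else 0)"
proof (cases "t \<le> a")
  case True
  then have "ramp a (Suc n) t = 1" for n
    by (simp add: ramp_eq mult_nonneg_nonpos)
  with True show ?thesis by simp
next
  case False
  from reals_Archimedean[of "t - a"] False
  obtain N where "inverse (real (Suc N)) < t - a" by auto
  then have N: "1 < real (Suc N) * (t - a)"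
    by (simp add: field_simps)
  have "ramp a (Suc n) t = 0" if "N \<le> n" for n
  proof -
    have "real (Suc N) * (t - a) \<le> real (Suc n) * (t - a)"
      using False that by (intro mult_right_mono) auto
    with N show ?thesis
      by (simp add: ramp_eq)
  qed
  then have "\<forall>\<^sub>F n in sequentially. ramp a (Suc n) t = 0"
    unfolding eventually_sequentially by blast
  then have "(\<lambda>n. ramp a (Suc n) t) \<longlonglongrightarrow> 0"
    by (rule tendsto_eventually)
  with False show ?thesis by simp
qed

lemma sets_eq_sigma_sublevel_sets_null_sets:
  assumes f[measurable]: "f \<in> borel_measurable M" and sig: "sigma_gen_completed M f = sets M"
  shows "sets M = sigma_sets (space M) ({f -` {..a} \<inter> space M | a. True} \<union> null_sets M)"
    (is "_ = sigma_sets _ ?G")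
proof
  have G: "?G \<subseteq> sets M" by auto
  then show "sigma_sets (space M) ?G \<subseteq> sets M"
    by (rule sets.sigma_sets_subset)
  let ?N = "sigma (space M) ?G"
  have G_space: "?G \<subseteq> Pow (space M)"
    using G sets.sets_into_space by auto
  have "f \<in> borel_measurable ?N"
    unfolding borel_measurable_iff_le space_measure_of[OF G_space]
  proof
    fix a
    have "{\<omega> \<in> space M. f \<omega> \<le> a} = f -` {..a} \<inter> space M" by auto
    also have "\<dots> \<in> sets ?N"
      unfolding sets_measure_of[OF G_space] by (rule sigma_sets.Basic) auto
    finally show "{\<omega> \<in> space M. f \<omega> \<le> a} \<in> sets ?N" .
  qed
  then have "f -` B \<inter> space M \<in> sigma_sets (space M) ?G" if "B \<in> sets borel" for B
    using measurable_sets[OF _ that, of f ?N]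
    unfolding sets_measure_of[OF G_space] space_measure_of[OF G_space] by blast
  then have "{f -` B \<inter> space M | B. B \<in> sets borel} \<union> null_sets M \<subseteq> sigma_sets (space M) ?G"
    by auto
  then show "sets M \<subseteq> sigma_sets (space M) ?G"
    using sigma_sets_mono sig unfolding sigma_gen_completed_def by blast
qed

lemma Int_stable_sublevel_sets_null_sets:
  fixes f :: "'a \<Rightarrow> real"
  assumes [measurable]: "f \<in> borel_measurable M"
  shows "Int_stable ({f -` {..a} \<inter> space M | a. True} \<union> null_sets M)"
proof (rule Int_stableI)
  fix A B assume A: "A \<in> {f -` {..a} \<inter> space M | a. True} \<union> null_sets M"
    and B: "B \<in> {f -` {..a} \<inter> space M | a. True} \<union> null_sets M"
  moreover have "f -` {..a} \<inter> space M \<in> sets M" for a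
    by (rule measurable_sets[OF assms atMost_borel])
  ultimately have "A \<in> sets M" "B \<in> sets M" by auto
  consider "A \<in> null_sets M" | "B \<in> null_sets M"
    | a b where "A = f -` {..a} \<inter> space M" "B = f -` {..b} \<inter> space M"
    using A B by auto
  then show "A \<inter> B \<in> {f -` {..a} \<inter> space M | a. True} \<union> null_sets M"
  proof cases
    case (3 a b)
    then have "A \<inter> B = f -` {..min a b} \<inter> space M" by auto
    then show ?thesis by blast
  qed (use \<open>A \<in> sets M\<close> \<open>B \<in> sets M\<close> null_set_Int1 null_set_Int2 in blast)+
qed

locale dominated_limit_closed =
  fixes M :: "'a measure" and X Q :: "('a \<Rightarrow> real) set" and f :: "'a \<Rightarrow> real"
  assumes ideal: "is_ideal_L0 M X"
    and const: "\<forall>c. (\<lambda>_. c) \<in> X"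
    and f_measurable[measurable]: "f \<in> borel_measurable M"
    and subset_ideal: "Q \<subseteq> X"
    and O_span_subset: "O_span f \<subseteq> Q"
    and add: "\<And>u v. u \<in> Q \<Longrightarrow> v \<in> Q \<Longrightarrow> (\<lambda>\<omega>. u \<omega> + v \<omega>) \<in> Q"
    and scale: "\<And>a u. u \<in> Q \<Longrightarrow> (\<lambda>\<omega>. a * u \<omega>) \<in> Q"
    and dominated_limit: "\<And>gs g z. (\<And>n. gs n \<in> Q) \<Longrightarrow> g \<in> X \<Longrightarrow> z \<in> X \<Longrightarrow>
      (\<And>n. AE \<omega> in M. \<bar>gs n \<omega> - g \<omega>\<bar> \<le> z \<omega>) \<Longrightarrow> (AE \<omega> in M. (\<lambda>n. gs n \<omega>) \<longlonglongrightarrow> g \<omega>) \<Longrightarrow>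
      g \<in> Q"
begin

lemma zero_mem: "(\<lambda>_. 0) \<in> Q"
  using O_span_subset O_span_zero by blast

lemma one_mem: "(\<lambda>_. 1) \<in> Q"
  using O_span_subset O_span_const_one by blast

lemma sum_mem: "finite I \<Longrightarrow> (\<And>i. i \<in> I \<Longrightarrow> u i \<in> Q) \<Longrightarrow> (\<lambda>\<omega>. \<Sum>i\<in>I. u i \<omega>) \<in> Q"
proof (induction I rule: finite_induct)
  case empty
  then show ?case using zero_mem by simp
next
  case (insert i I)
  then show ?case using add[of "u i" "\<lambda>\<omega>. \<Sum>i\<in>I. u i \<omega>"] by simp
qed

lemma AE_eq_mem:
  assumes "u \<in> Q" "g \<in> X" and eq: "AE \<omega> in M. u \<omega> = g \<omega>"
  shows "g \<in> Q"
proof (rule dominated_limit[of "\<lambda>_. u" g "\<lambda>_. 0"])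
  show "AE \<omega> in M. \<bar>u \<omega> - g \<omega>\<bar> \<le> 0" for n :: nat
    using eq by eventually_elim simp
  show "AE \<omega> in M. (\<lambda>n. u \<omega>) \<longlonglongrightarrow> g \<omega>"
    using eq by eventually_elim simp
qed (use assms ideal_zero[OF ideal] in auto)

lemma bounded_in_ideal:
  assumes "x \<in> borel_measurable M" and bound: "\<And>\<omega>. \<omega> \<in> space M \<Longrightarrow> \<bar>x \<omega>\<bar> \<le> B"
  shows "x \<in> X"
proof (rule ideal_dominated[OF ideal _ assms(1)])
  show "(\<lambda>_. B) \<in> X"
    using const by blast
  show "AE \<omega> in M. \<bar>x \<omega>\<bar> \<le> \<bar>B\<bar>"
    using bound by (intro AE_I2) (rule order_trans[OF _ abs_ge_self])
qed

lemma indicator_in_ideal: "A \<in> sets M \<Longrightarrow> indicator A \<in> X"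
  by (rule bounded_in_ideal[of _ 1]) (auto simp: indicator_def)

lemma indicator_sublevel_set_mem: "indicator (f -` {..a} \<inter> space M) \<in> Q"
proof (rule dominated_limit[of "\<lambda>n \<omega>. ramp a (Suc n) (f \<omega>)" _ "\<lambda>_. 1"])
  let ?A = "f -` {..a} \<inter> space M"
  show "(\<lambda>\<omega>. ramp a (Suc n) (f \<omega>)) \<in> Q" for n
    using O_span_subset ramp_in_O_span by blast
  show "indicator ?A \<in> X" "(\<lambda>_. 1) \<in> X"
    using indicator_in_ideal const by auto
  have indicator_eq: "indicator ?A \<omega> = (if f \<omega> \<le> a then 1 else 0 :: real)" if "\<omega> \<in> space M" for \<omega>
    using that by (simp add: indicator_def)
  show "AE \<omega> in M. \<bar>ramp a (Suc n) (f \<omega>) - indicator ?A \<omega>\<bar> \<le> 1" for n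
  proof (rule AE_I2)
    fix \<omega> assume "\<omega> \<in> space M"
    with ramp_bounds[of "real (Suc n)" a "f \<omega>"] show "\<bar>ramp a (Suc n) (f \<omega>) - indicator ?A \<omega>\<bar> \<le> 1"
      unfolding indicator_eq[OF \<open>\<omega> \<in> space M\<close>] by (simp only: of_nat_0_less_iff zero_less_Suc) auto
  qed
  show "AE \<omega> in M. (\<lambda>n. ramp a (Suc n) (f \<omega>)) \<longlonglongrightarrow> indicator ?A \<omega>"
    using ramp_tendsto_indicator indicator_eq by (intro AE_I2) presburger
qed

lemma indicator_disjoint_UN_mem:
  fixes A :: "nat \<Rightarrow> 'a set"
  assumes disjoint: "disjoint_family A" and A: "\<And>i. A i \<in> sets M"
    and mem: "\<And>i. indicator (A i) \<in> Q"
  shows "indicator (\<Union>i. A i) \<in> Q"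
proof (rule dominated_limit[of "\<lambda>n \<omega>. \<Sum>i<n. indicator (A i) \<omega>" _ "\<lambda>_. 1"])
  show "(\<lambda>\<omega>. \<Sum>i<n. indicator (A i) \<omega>) \<in> Q" for n :: nat
    using mem by (intro sum_mem) blast+
  show "indicator (\<Union>i. A i) \<in> X"
    using A by (intro indicator_in_ideal) blast
  show "(\<lambda>_. 1) \<in> X"
    using const by blast
  have partial_sum: "(\<Sum>i<n. indicator (A i) \<omega>) = (indicator (\<Union>(A ` {..<n})) \<omega> :: real)" for n \<omega>
    by (rule indicator_UN_disjoint[symmetric]) (use disjoint disjoint_family_on_mono in blast)+
  show "AE \<omega> in M. \<bar>(\<Sum>i<n. indicator (A i) \<omega>) - indicator (\<Union>i. A i) \<omega>\<bar> \<le> (1::real)" for n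
    by (intro AE_I2) (simp only: partial_sum, simp add: indicator_def)
  have "A i \<inter> A j = {}" if "i \<noteq> j" for i j
    using disjoint that unfolding disjoint_family_on_def by blast
  then have "(\<lambda>i. indicator (A i) \<omega> :: real) sums indicator (\<Union>i. A i) \<omega>" for \<omega>
    by (rule indicator_sums)
  then show "AE \<omega> in M. (\<lambda>n. \<Sum>i<n. indicator (A i) \<omega> :: real) \<longlonglongrightarrow> indicator (\<Union>i. A i) \<omega>"
    unfolding sums_def by (intro AE_I2)
qed

lemma indicator_mem:
  assumes sig: "sigma_gen_completed M f = sets M" and A: "A \<in> sets M"
  shows "indicator A \<in> Q"
proof -
  let ?G = "{f -` {..a} \<inter> space M | a. True} \<union> null_sets M"
  have sets_eq: "sets M = sigma_sets (space M) ?G"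
    using sets_eq_sigma_sublevel_sets_null_sets[OF f_measurable sig] .
  have G_space: "?G \<subseteq> Pow (space M)"
    using sets.sets_into_space by auto
  have "A \<in> sigma_sets (space M) ?G"
    using A unfolding sets_eq .
  with Int_stable_sublevel_sets_null_sets[OF f_measurable] G_space show ?thesis
  proof (induction rule: sigma_sets_induct_disjoint)
    case (basic A)
    then consider a where "A = f -` {..a} \<inter> space M" | "A \<in> null_sets M"
      by blast
    then show ?case
    proof cases
      case 2
      have "AE \<omega> in M. 0 = indicator A \<omega>"
        using AE_not_in[OF 2] by eventually_elim simp
      with 2 show ?thesis
        using AE_eq_mem[OF zero_mem indicator_in_ideal] by blast
    qed (use indicator_sublevel_set_mem in simp)
  next
    case empty
    show ?case
      using zero_mem by (simp add: fun_eq_iff)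
  next
    case (compl A)
    have "A \<in> sets M"
      using compl(1) by (simp only: sets_eq)
    then show ?case
      using AE_eq_mem[OF add[OF one_mem scale[OF compl(2), of "-1"]] indicator_in_ideal]
      by (simp add: AE_I2 split: split_indicator)
  next
    case (union A)
    have "A i \<in> sets M" for i
      using union(2) unfolding sets_eq by blast
    then show ?case
      using union(1,3) by (intro indicator_disjoint_UN_mem)
  qed
qed

lemma simple_function_mem:
  assumes sig: "sigma_gen_completed M f = sets M" and s: "simple_function M s"
  shows "s \<in> Q"
proof (rule AE_eq_mem)
  have [measurable]: "s \<in> borel_measurable M"
    using s by (rule borel_measurable_simple_function)
  have finite: "finite (s ` space M)"
    using s by (rule simple_functionD(1))
  show "(\<lambda>\<omega>. \<Sum>y\<in>s ` space M. y * indicator (s -` {y} \<inter> space M) \<omega>) \<in> Q"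
    by (rule sum_mem[OF finite]) (intro scale indicator_mem[OF sig] simple_functionD(2)[OF s])
  show "s \<in> X"
  proof (rule bounded_in_ideal)
    show "\<bar>s \<omega>\<bar> \<le> Max (abs ` s ` space M)" if "\<omega> \<in> space M" for \<omega>
      using finite that by (intro Max_ge) auto
  qed (rule borel_measurable_simple_function[OF s])
  show "AE \<omega> in M. (\<Sum>y\<in>s ` space M. y * indicator (s -` {y} \<inter> space M) \<omega>) = s \<omega>"
    using simple_function_indicator_representation_AE[OF s]
  proof eventually_elim
    case (elim \<omega>)
    have "(\<Sum>y\<in>s ` space M. y * indicator (s -` {y} \<inter> space M) \<omega>) =
        (\<Sum>y\<in>s ` space M. indicator (s -` {y} \<inter> space M) \<omega> *\<^sub>R y)"
      by (intro sum.cong refl) (simp add: mult.commute)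
    with elim show ?case by (simp only:)
  qed
qed

lemma ideal_subset:
  assumes sig: "sigma_gen_completed M f = sets M"
  shows "X \<subseteq> Q"
proof
  fix g assume g: "g \<in> X"
  have [measurable]: "g \<in> borel_measurable M"
    using ideal_measurable[OF ideal g] .
  from borel_measurable_implies_sequence_metric[OF this, of 0]
  obtain F where "\<forall>i. simple_function M (F i)" "\<forall>\<omega>\<in>space M. (\<lambda>i. F i \<omega>) \<longlonglongrightarrow> g \<omega>"
      "\<forall>i. \<forall>\<omega>\<in>space M. dist (F i \<omega>) 0 \<le> 2 * dist (g \<omega>) 0"
    by blast
  then have F: "\<And>i. simple_function M (F i)" "\<And>\<omega>. \<omega> \<in> space M \<Longrightarrow> (\<lambda>i. F i \<omega>) \<longlonglongrightarrow> g \<omega>"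
      "\<And>i \<omega>. \<omega> \<in> space M \<Longrightarrow> \<bar>F i \<omega>\<bar> \<le> 2 * \<bar>g \<omega>\<bar>"
    by (auto simp: dist_real_def)
  show "g \<in> Q"
  proof (rule dominated_limit[of F g "\<lambda>\<omega>. 3 * \<bar>g \<omega>\<bar>"])
    show "F n \<in> Q" for n
      using simple_function_mem[OF sig F(1)] .
    show "(\<lambda>\<omega>. 3 * \<bar>g \<omega>\<bar>) \<in> X"
      by (rule ideal_dominated[OF ideal ideal_scale[OF ideal g, of 3]]) auto
    show "AE \<omega> in M. \<bar>F n \<omega> - g \<omega>\<bar> \<le> 3 * \<bar>g \<omega>\<bar>" for n
    proof (rule AE_I2)
      fix \<omega> assume "\<omega> \<in> space M"
      with F(3)[of \<omega> n] abs_triangle_ineq4[of "F n \<omega>" "g \<omega>"]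
      show "\<bar>F n \<omega> - g \<omega>\<bar> \<le> 3 * \<bar>g \<omega>\<bar>" by linarith
    qed
    show "AE \<omega> in M. (\<lambda>n. F n \<omega>) \<longlonglongrightarrow> g \<omega>"
      using F(2) by (rule AE_I2)
  qed (rule g)
qed

end

text \<open>The gauges \<open>\<bar>\<phi>\<bar>\<close>, \<open>\<phi> \<in> X\<^sub>n\<^sup>\<sim>\<close>, generate \<open>\<sigma>(X, X\<^sub>n\<^sup>\<sim>)\<close>, and the single gauge
  \<open>\<integral> min 1 \<bar>u\<bar>\<close> metrizes convergence in measure; \<open>gauge_closure S\<close> is the closure of \<open>S\<close> in the
  uniformity generated by the \<open>p i\<close>.\<close>

locale ideal_gauges =
  fixes M :: "'a measure" and X :: "('a \<Rightarrow> real) set"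
    and I :: "'i set" and p :: "'i \<Rightarrow> ('a \<Rightarrow> real) \<Rightarrow> real"
  assumes ideal: "is_ideal_L0 M X"
    and gauge_zero: "\<And>i. i \<in> I \<Longrightarrow> p i (\<lambda>_. 0) = 0"
    and gauge_add: "\<And>i u v. i \<in> I \<Longrightarrow> u \<in> X \<Longrightarrow> v \<in> X \<Longrightarrow> p i (\<lambda>\<omega>. u \<omega> + v \<omega>) \<le> p i u + p i v"
    and gauge_scale: "\<And>i a u. i \<in> I \<Longrightarrow> u \<in> X \<Longrightarrow> p i (\<lambda>\<omega>. a * u \<omega>) \<le> (\<bar>a\<bar> + 1) * p i u"
    and gauge_dominated_tendsto: "\<And>i ys z. i \<in> I \<Longrightarrow> (\<And>n. ys n \<in> X) \<Longrightarrow> z \<in> X \<Longrightarrow>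
      (\<And>n. AE \<omega> in M. \<bar>ys n \<omega>\<bar> \<le> z \<omega>) \<Longrightarrow> (AE \<omega> in M. (\<lambda>n. ys n \<omega>) \<longlonglongrightarrow> 0) \<Longrightarrow>
      (\<lambda>n. p i (ys n)) \<longlonglongrightarrow> 0"
begin

definition gauge_closure :: "('a \<Rightarrow> real) set \<Rightarrow> ('a \<Rightarrow> real) set" where
  "gauge_closure S = {g \<in> X. \<forall>J \<epsilon>. finite J \<and> J \<subseteq> I \<and> 0 < \<epsilon> \<longrightarrow> (\<exists>u\<in>S. \<forall>i\<in>J. p i (\<lambda>\<omega>. u \<omega> - g \<omega>) < \<epsilon>)}"

lemma gauge_closureD:
  "g \<in> gauge_closure S \<Longrightarrow> finite J \<Longrightarrow> J \<subseteq> I \<Longrightarrow> 0 < \<epsilon> \<Longrightarrow> \<exists>u\<in>S. \<forall>i\<in>J. p i (\<lambda>\<omega>. u \<omega> - g \<omega>) < \<epsilon>"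
  unfolding gauge_closure_def by blast

lemma gauge_closure_subset_ideal: "gauge_closure S \<subseteq> X"
  unfolding gauge_closure_def by blast

lemma subset_gauge_closure:
  assumes "S \<subseteq> X"
  shows "S \<subseteq> gauge_closure S"
proof
  fix u assume u: "u \<in> S"
  have zero_diff: "p i (\<lambda>\<omega>. u \<omega> - u \<omega>) = 0" if "i \<in> I" for i
    using gauge_zero[OF that] by simp
  show "u \<in> gauge_closure S"
    unfolding gauge_closure_def
  proof (intro CollectI conjI allI impI)
    show "u \<in> X"
      using u assms by blast
    fix J and \<epsilon> :: real assume "finite J \<and> J \<subseteq> I \<and> 0 < \<epsilon>"
    with u zero_diff show "\<exists>w\<in>S. \<forall>i\<in>J. p i (\<lambda>\<omega>. w \<omega> - u \<omega>) < \<epsilon>"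
      by (intro bexI[of _ u]) auto
  qed
qed

lemma gauge_diff_add:
  assumes "i \<in> I" "u \<in> X" "v \<in> X" "w \<in> X"
  shows "p i (\<lambda>\<omega>. u \<omega> - w \<omega>) \<le> p i (\<lambda>\<omega>. u \<omega> - v \<omega>) + p i (\<lambda>\<omega>. v \<omega> - w \<omega>)"
  using gauge_add[OF assms(1) ideal_diff[OF ideal assms(2,3)] ideal_diff[OF ideal assms(3,4)]] by simp

lemma gauge_closure_add:
  assumes S: "S \<subseteq> X" "\<And>u v. u \<in> S \<Longrightarrow> v \<in> S \<Longrightarrow> (\<lambda>\<omega>. u \<omega> + v \<omega>) \<in> S"
    and u: "u \<in> gauge_closure S" and v: "v \<in> gauge_closure S"
  shows "(\<lambda>\<omega>. u \<omega> + v \<omega>) \<in> gauge_closure S"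
  unfolding gauge_closure_def
proof (intro CollectI conjI allI impI)
  have uX: "u \<in> X" and vX: "v \<in> X"
    using u v gauge_closure_subset_ideal by auto
  then show "(\<lambda>\<omega>. u \<omega> + v \<omega>) \<in> X"
    by (rule ideal_add[OF ideal])
  fix J and \<epsilon> :: real assume J: "finite J \<and> J \<subseteq> I \<and> 0 < \<epsilon>"
  then have J': "finite J" "J \<subseteq> I" "0 < \<epsilon> / 2"
    by auto
  obtain u' where u': "u' \<in> S" "\<forall>i\<in>J. p i (\<lambda>\<omega>. u' \<omega> - u \<omega>) < \<epsilon> / 2"
    using gauge_closureD[OF u J'] by blast
  obtain v' where v': "v' \<in> S" "\<forall>i\<in>J. p i (\<lambda>\<omega>. v' \<omega> - v \<omega>) < \<epsilon> / 2"
    using gauge_closureD[OF v J'] by blast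
  have close: "p i (\<lambda>\<omega>. (u' \<omega> + v' \<omega>) - (u \<omega> + v \<omega>)) < \<epsilon>" if "i \<in> J" for i
  proof -
    have "p i (\<lambda>\<omega>. (u' \<omega> + v' \<omega>) - (u \<omega> + v \<omega>)) = p i (\<lambda>\<omega>. (u' \<omega> - u \<omega>) + (v' \<omega> - v \<omega>))"
      by (rule arg_cong[where f = "p i"]) (simp add: fun_eq_iff)
    also have "\<dots> \<le> p i (\<lambda>\<omega>. u' \<omega> - u \<omega>) + p i (\<lambda>\<omega>. v' \<omega> - v \<omega>)"
      using J that S(1) u'(1) v'(1) uX vX by (intro gauge_add ideal_diff[OF ideal]) auto
    also have "\<dots> < \<epsilon> / 2 + \<epsilon> / 2"
      using u'(2) v'(2) that by (intro add_strict_mono) auto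
    finally show ?thesis
      by simp
  qed
  show "\<exists>w\<in>S. \<forall>i\<in>J. p i (\<lambda>\<omega>. w \<omega> - (u \<omega> + v \<omega>)) < \<epsilon>"
    using S(2)[OF u'(1) v'(1)] close by (intro bexI[of _ "\<lambda>\<omega>. u' \<omega> + v' \<omega>"] ballI)
qed

lemma gauge_closure_scale:
  assumes S: "S \<subseteq> X" "\<And>a u. u \<in> S \<Longrightarrow> (\<lambda>\<omega>. a * u \<omega>) \<in> S"
    and u: "u \<in> gauge_closure S"
  shows "(\<lambda>\<omega>. a * u \<omega>) \<in> gauge_closure S"
  unfolding gauge_closure_def
proof (intro CollectI conjI allI impI)
  have uX: "u \<in> X"
    using u gauge_closure_subset_ideal by auto
  then show "(\<lambda>\<omega>. a * u \<omega>) \<in> X"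
    by (rule ideal_scale[OF ideal])
  fix J and \<epsilon> :: real assume J: "finite J \<and> J \<subseteq> I \<and> 0 < \<epsilon>"
  then have J': "finite J" "J \<subseteq> I" "0 < \<epsilon> / (\<bar>a\<bar> + 1)"
    by auto
  obtain u' where u': "u' \<in> S" "\<forall>i\<in>J. p i (\<lambda>\<omega>. u' \<omega> - u \<omega>) < \<epsilon> / (\<bar>a\<bar> + 1)"
    using gauge_closureD[OF u J'] by blast
  have close: "p i (\<lambda>\<omega>. a * u' \<omega> - a * u \<omega>) < \<epsilon>" if "i \<in> J" for i
  proof -
    have "p i (\<lambda>\<omega>. a * u' \<omega> - a * u \<omega>) = p i (\<lambda>\<omega>. a * (u' \<omega> - u \<omega>))"
      by (simp add: right_diff_distrib)
    also have "\<dots> \<le> (\<bar>a\<bar> + 1) * p i (\<lambda>\<omega>. u' \<omega> - u \<omega>)"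
      using J that S(1) u'(1) uX by (intro gauge_scale ideal_diff[OF ideal]) auto
    also have "\<dots> < (\<bar>a\<bar> + 1) * (\<epsilon> / (\<bar>a\<bar> + 1))"
      using u'(2) that by (intro mult_strict_left_mono) auto
    finally show ?thesis
      by simp
  qed
  show "\<exists>w\<in>S. \<forall>i\<in>J. p i (\<lambda>\<omega>. w \<omega> - a * u \<omega>) < \<epsilon>"
    using S(2)[OF u'(1), of a] close by (intro bexI[of _ "\<lambda>\<omega>. a * u' \<omega>"] ballI)
qed

lemma gauge_closure_dominated_limit:
  assumes S: "S \<subseteq> X" and gs: "\<And>n. gs n \<in> gauge_closure S" and g: "g \<in> X" and z: "z \<in> X"
    and dominated: "\<And>n. AE \<omega> in M. \<bar>gs n \<omega> - g \<omega>\<bar> \<le> z \<omega>"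
    and lim: "AE \<omega> in M. (\<lambda>n. gs n \<omega>) \<longlonglongrightarrow> g \<omega>"
  shows "g \<in> gauge_closure S"
  unfolding gauge_closure_def
proof (intro CollectI conjI allI impI g)
  have gsX: "gs n \<in> X" for n
    using gs gauge_closure_subset_ideal by auto
  fix J and \<epsilon> :: real assume J: "finite J \<and> J \<subseteq> I \<and> 0 < \<epsilon>"
  have tendsto: "(\<lambda>n. p i (\<lambda>\<omega>. gs n \<omega> - g \<omega>)) \<longlonglongrightarrow> 0" if "i \<in> J" for i
  proof (rule gauge_dominated_tendsto[of i "\<lambda>n \<omega>. gs n \<omega> - g \<omega>" z])
    show "i \<in> I"
      using J that by auto
    show "(\<lambda>\<omega>. gs n \<omega> - g \<omega>) \<in> X" for n
      using gsX g by (rule ideal_diff[OF ideal])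
    show "AE \<omega> in M. (\<lambda>n. gs n \<omega> - g \<omega>) \<longlonglongrightarrow> 0"
      using lim by eventually_elim (rule LIM_zero)
  qed (use z dominated in auto)
  have "\<forall>\<^sub>F n in sequentially. \<forall>i\<in>J. p i (\<lambda>\<omega>. gs n \<omega> - g \<omega>) < \<epsilon> / 2"
  proof (intro eventually_ball_finite ballI)
    fix i assume "i \<in> J"
    have "0 < \<epsilon> / 2"
      using J by simp
    from order_tendstoD(2)[OF tendsto[OF \<open>i \<in> J\<close>] this]
    show "\<forall>\<^sub>F n in sequentially. p i (\<lambda>\<omega>. gs n \<omega> - g \<omega>) < \<epsilon> / 2" .
  qed (use J in simp)
  then obtain N where N: "\<forall>i\<in>J. p i (\<lambda>\<omega>. gs N \<omega> - g \<omega>) < \<epsilon> / 2"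
    using eventually_sequentially by auto
  have J': "finite J" "J \<subseteq> I" "0 < \<epsilon> / 2"
    using J by auto
  obtain u where u: "u \<in> S" "\<forall>i\<in>J. p i (\<lambda>\<omega>. u \<omega> - gs N \<omega>) < \<epsilon> / 2"
    using gauge_closureD[OF gs J'] by blast
  have close: "p i (\<lambda>\<omega>. u \<omega> - g \<omega>) < \<epsilon>" if "i \<in> J" for i
  proof -
    have "p i (\<lambda>\<omega>. u \<omega> - g \<omega>) \<le> p i (\<lambda>\<omega>. u \<omega> - gs N \<omega>) + p i (\<lambda>\<omega>. gs N \<omega> - g \<omega>)"
      using J that S u(1) gsX g by (intro gauge_diff_add) auto
    moreover have "p i (\<lambda>\<omega>. u \<omega> - gs N \<omega>) < \<epsilon> / 2" "p i (\<lambda>\<omega>. gs N \<omega> - g \<omega>) < \<epsilon> / 2"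
      using u(2) N that by auto
    ultimately show ?thesis
      by linarith
  qed
  show "\<exists>w\<in>S. \<forall>i\<in>J. p i (\<lambda>\<omega>. w \<omega> - g \<omega>) < \<epsilon>"
    using u(1) close by (intro bexI[of _ u] ballI)
qed

lemma ideal_subset_gauge_closure_O_span:
  assumes const: "\<forall>c. (\<lambda>_. c) \<in> X" and f: "f \<in> X" and sig: "sigma_gen_completed M f = sets M"
  shows "X \<subseteq> gauge_closure (O_span f)"
proof (rule dominated_limit_closed.ideal_subset[OF _ sig])
  have O_span_X: "O_span f \<subseteq> X"
    using O_span_subset_ideal[OF ideal const f] .
  show "dominated_limit_closed M X (gauge_closure (O_span f)) f"
  proof
    show "f \<in> borel_measurable M"
      using ideal_measurable[OF ideal f] .
    show "(\<lambda>\<omega>. u \<omega> + v \<omega>) \<in> gauge_closure (O_span f)"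
      if "u \<in> gauge_closure (O_span f)" "v \<in> gauge_closure (O_span f)" for u v
      using O_span_X O_span_add that by (rule gauge_closure_add)
    show "(\<lambda>\<omega>. a * u \<omega>) \<in> gauge_closure (O_span f)" if "u \<in> gauge_closure (O_span f)" for a u
      using O_span_X O_span_scale that by (rule gauge_closure_scale)
    show "g \<in> gauge_closure (O_span f)"
      if "\<And>n. gs n \<in> gauge_closure (O_span f)" "g \<in> X" "z \<in> X"
        "\<And>n. AE \<omega> in M. \<bar>gs n \<omega> - g \<omega>\<bar> \<le> z \<omega>" "AE \<omega> in M. (\<lambda>n. gs n \<omega>) \<longlonglongrightarrow> g \<omega>"
      for gs g z
      using O_span_X that by (rule gauge_closure_dominated_limit)
  qed (use ideal const O_span_X gauge_closure_subset_ideal subset_gauge_closure in auto)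
qed

end

lemma generate_topology_on_functionals_nbhd:
  fixes F :: "('b \<Rightarrow> real) set"
  assumes "generate_topology_on (insert X {{x \<in> X. \<phi> x \<in> U} | \<phi> U. \<phi> \<in> F \<and> open U}) T"
    and "g \<in> T"
  shows "\<exists>\<Phi> e. finite \<Phi> \<and> \<Phi> \<subseteq> F \<and> 0 < e \<and> (\<forall>y\<in>X. (\<forall>\<phi>\<in>\<Phi>. \<bar>\<phi> y - \<phi> g\<bar> < e) \<longrightarrow> y \<in> T)"
  using assms
proof induction
  case Empty
  then show ?case by simp
next
  case (Int T1 T2)
  from Int.prems have "g \<in> T1" "g \<in> T2" by auto
  from Int.IH(1)[OF \<open>g \<in> T1\<close>] Int.IH(2)[OF \<open>g \<in> T2\<close>] obtain \<Phi>1 e1 \<Phi>2 e2 where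
    1: "finite \<Phi>1" "\<Phi>1 \<subseteq> F" "0 < e1" "\<forall>y\<in>X. (\<forall>\<phi>\<in>\<Phi>1. \<bar>\<phi> y - \<phi> g\<bar> < e1) \<longrightarrow> y \<in> T1" and
    2: "finite \<Phi>2" "\<Phi>2 \<subseteq> F" "0 < e2" "\<forall>y\<in>X. (\<forall>\<phi>\<in>\<Phi>2. \<bar>\<phi> y - \<phi> g\<bar> < e2) \<longrightarrow> y \<in> T2"
    by blast
  have "\<forall>y\<in>X. (\<forall>\<phi>\<in>\<Phi>1 \<union> \<Phi>2. \<bar>\<phi> y - \<phi> g\<bar> < min e1 e2) \<longrightarrow> y \<in> T1 \<inter> T2"
    using 1(4) 2(4) by simp
  with 1(1-3) 2(1-3) show ?case
    by (intro exI[of _ "\<Phi>1 \<union> \<Phi>2"] exI[of _ "min e1 e2"]) simp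
next
  case (UN K)
  then obtain T' where T': "T' \<in> K" "g \<in> T'"
    by blast
  from UN.IH[OF T'] obtain \<Phi> e where "finite \<Phi>" "\<Phi> \<subseteq> F" "0 < e"
    "\<forall>y\<in>X. (\<forall>\<phi>\<in>\<Phi>. \<bar>\<phi> y - \<phi> g\<bar> < e) \<longrightarrow> y \<in> T'"
    by blast
  moreover have "T' \<subseteq> \<Union>K"
    using T'(1) by blast
  ultimately show ?case
    by (intro exI[of _ \<Phi>] exI[of _ e]) blast
next
  case (Basis T)
  show ?case
  proof (cases "T = X")
    case True
    then show ?thesis by (intro exI[of _ "{}"] exI[of _ 1]) auto
  next
    case False
    with Basis.hyps obtain \<phi> U where T: "T = {x \<in> X. \<phi> x \<in> U}" "\<phi> \<in> F" "open U"
      by auto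
    with Basis.prems obtain e where e: "0 < e" "\<And>t. dist t (\<phi> g) < e \<Longrightarrow> t \<in> U"
      unfolding open_dist by blast
    then have "\<forall>y\<in>X. (\<forall>\<psi>\<in>{\<phi>}. \<bar>\<psi> y - \<psi> g\<bar> < e) \<longrightarrow> y \<in> T"
      unfolding T(1) by (simp add: dist_real_def)
    with T(2) e(1) show ?thesis
      by (intro exI[of _ "{\<phi>}"] exI[of _ e]) simp
  qed
qed

lemma closure_of_functionals_topology_eq:
  fixes F :: "('b \<Rightarrow> real) set"
  assumes "S \<subseteq> X"
    and dense: "\<And>g \<Phi> e. g \<in> X \<Longrightarrow> finite \<Phi> \<Longrightarrow> \<Phi> \<subseteq> F \<Longrightarrow> 0 < e \<Longrightarrow> \<exists>u\<in>S. \<forall>\<phi>\<in>\<Phi>. \<bar>\<phi> u - \<phi> g\<bar> < e"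
  shows "topology_generated_by (insert X {{x \<in> X. \<phi> x \<in> U} | \<phi> U. \<phi> \<in> F \<and> open U}) closure_of S = X"
    (is "?T closure_of S = X")
proof
  have topspace: "topspace ?T = X"
    unfolding topology_generated_by_topspace by blast
  show "?T closure_of S \<subseteq> X"
    using closure_of_subset_topspace[of ?T S] unfolding topspace .
  show "X \<subseteq> ?T closure_of S"
  proof
    fix g assume g: "g \<in> X"
    have "\<exists>u. u \<in> S \<and> u \<in> T" if T: "g \<in> T" "openin ?T T" for T
    proof -
      have "generate_topology_on (insert X {{x \<in> X. \<phi> x \<in> U} | \<phi> U. \<phi> \<in> F \<and> open U}) T"
        using T(2) by (rule openin_topology_generated_by)
      from generate_topology_on_functionals_nbhd[OF this T(1)] obtain \<Phi> e where
        "finite \<Phi>" "\<Phi> \<subseteq> F" "0 < e" and nbhd: "\<forall>y\<in>X. (\<forall>\<phi>\<in>\<Phi>. \<bar>\<phi> y - \<phi> g\<bar> < e) \<longrightarrow> y \<in> T"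
        by blast
      with dense[OF g] obtain u where "u \<in> S" "\<forall>\<phi>\<in>\<Phi>. \<bar>\<phi> u - \<phi> g\<bar> < e"
        by blast
      with nbhd \<open>S \<subseteq> X\<close> show ?thesis
        by blast
    qed
    with g show "g \<in> ?T closure_of S"
      unfolding in_closure_of topspace by blast
  qed
qed

lemma AE_tendsto_zero_if_summable_integral:
  fixes h :: "nat \<Rightarrow> 'a \<Rightarrow> real"
  assumes [measurable]: "\<And>n. h n \<in> borel_measurable M" and nonneg: "\<And>n \<omega>. 0 \<le> h n \<omega>"
    and integrable: "\<And>n. integrable M (h n)" and summable: "summable (\<lambda>n. integral\<^sup>L M (h n))"
  shows "AE \<omega> in M. (\<lambda>n. h n \<omega>) \<longlonglongrightarrow> 0"
proof -
  have "(\<integral>\<^sup>+\<omega>. (\<Sum>n. ennreal (h n \<omega>)) \<partial>M) = (\<Sum>n. \<integral>\<^sup>+\<omega>. ennreal (h n \<omega>) \<partial>M)"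
    by (rule nn_integral_suminf) measurable
  also have "\<dots> = (\<Sum>n. ennreal (integral\<^sup>L M (h n)))"
    using nn_integral_eq_integral[OF integrable] nonneg by simp
  also have "\<dots> = ennreal (\<Sum>n. integral\<^sup>L M (h n))"
    using summable nonneg by (intro suminf_ennreal2) (auto intro: integral_nonneg_AE)
  finally have "AE \<omega> in M. (\<Sum>n. ennreal (h n \<omega>)) \<noteq> \<infinity>"
    by (intro nn_integral_PInf_AE) auto
  then show ?thesis
  proof eventually_elim
    case (elim \<omega>)
    then have "summable (\<lambda>n. h n \<omega>)"
      using nonneg by (intro summable_suminf_not_top) auto
    then show ?case
      by (rule summable_LIMSEQ_zero)
  qed
qed

lemma (in finite_measure) AE_convergent_sequence_if_truncated_L1_dense:
  fixes S :: "('a \<Rightarrow> real) set" and g :: "'a \<Rightarrow> real"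
  assumes S: "S \<subseteq> borel_measurable M" and g[measurable]: "g \<in> borel_measurable M"
    and dense: "\<And>e. 0 < e \<Longrightarrow> \<exists>u\<in>S. (\<integral>\<omega>. min 1 \<bar>u \<omega> - g \<omega>\<bar> \<partial>M) < e"
  shows "\<exists>gn. (\<forall>n. gn n \<in> S) \<and> (AE \<omega> in M. (\<lambda>n. gn n \<omega>) \<longlonglongrightarrow> g \<omega>)"
proof -
  obtain gn where gn: "\<And>n. gn n \<in> S" "\<And>n. (\<integral>\<omega>. min 1 \<bar>gn n \<omega> - g \<omega>\<bar> \<partial>M) < (1/2) ^ n"
    using dense[of "(1/2) ^ _"] by (metis zero_less_divide_1_iff zero_less_numeral zero_less_power)
  have [measurable]: "gn n \<in> borel_measurable M" for n
    using gn(1) S by blast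
  have "AE \<omega> in M. (\<lambda>n. min 1 \<bar>gn n \<omega> - g \<omega>\<bar>) \<longlonglongrightarrow> 0"
  proof (rule AE_tendsto_zero_if_summable_integral)
    show "integrable M (\<lambda>\<omega>. min 1 \<bar>gn n \<omega> - g \<omega>\<bar>)" for n
      by (rule integrable_const_bound[where B = 1]) auto
    show "summable (\<lambda>n. \<integral>\<omega>. min 1 \<bar>gn n \<omega> - g \<omega>\<bar> \<partial>M)"
      by (rule summable_comparison_test'[OF summable_geometric[of "1/2"], of 0])
        (use gn(2) in \<open>auto intro: less_imp_le\<close>)
  qed auto
  then have "AE \<omega> in M. (\<lambda>n. gn n \<omega>) \<longlonglongrightarrow> g \<omega>"
  proof eventually_elim
    case (elim \<omega>)
    then have "\<forall>\<^sub>F n in sequentially. min 1 \<bar>gn n \<omega> - g \<omega>\<bar> = \<bar>gn n \<omega> - g \<omega>\<bar>"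
      by (rule order_tendstoD(2)[THEN eventually_mono]) (auto simp: min_def)
    with elim have "(\<lambda>n. \<bar>gn n \<omega> - g \<omega>\<bar>) \<longlonglongrightarrow> 0"
      by (rule Lim_transform_eventually)
    then show ?case
      by (simp add: LIM_zero_cancel tendsto_rabs_zero_iff)
  qed
  with gn(1) show ?thesis
    by blast
qed

lemma linear_functional_diff:
  assumes ideal: "is_ideal_L0 M X" and \<phi>: "linear_functional_on M X \<phi>" and "u \<in> X" "v \<in> X"
  shows "\<phi> (\<lambda>\<omega>. u \<omega> - v \<omega>) = \<phi> u - \<phi> v"
proof -
  have add: "\<phi> (\<lambda>\<omega>. x \<omega> + y \<omega>) = \<phi> x + \<phi> y" and scale: "\<phi> (\<lambda>\<omega>. c * x \<omega>) = c * \<phi> x"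
    if "x \<in> X" "y \<in> X" for x y c
    using \<phi> that unfolding linear_functional_on_def by blast+
  have "(\<lambda>\<omega>. u \<omega> - v \<omega>) = (\<lambda>\<omega>. u \<omega> + (-1) * v \<omega>)"
    by simp
  then show ?thesis
    using add[OF assms(3) ideal_scale[OF ideal assms(4)], of "-1"] scale[OF assms(4,4), of "-1"]
    by (simp only:)
qed

lemma ideal_gauges_order_dual:
  assumes ideal: "is_ideal_L0 M X"
  shows "ideal_gauges M X (order_dual_n M X) (\<lambda>\<phi> x. \<bar>\<phi> x\<bar>)"
proof
  fix \<phi> assume "\<phi> \<in> order_dual_n M X"
  then have oc: "order_continuous_functional M X \<phi>"
    unfolding order_dual_n_def by simp
  then have lin: "linear_functional_on M X \<phi>"
    unfolding order_continuous_functional_def by simp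
  have add: "\<phi> (\<lambda>\<omega>. u \<omega> + v \<omega>) = \<phi> u + \<phi> v" and scale: "\<phi> (\<lambda>\<omega>. a * u \<omega>) = a * \<phi> u"
    if "u \<in> X" "v \<in> X" for u v a
    using lin that unfolding linear_functional_on_def by blast+
  show "\<bar>\<phi> (\<lambda>_. 0)\<bar> = 0"
    using scale[OF ideal_zero[OF ideal] ideal_zero[OF ideal], of 0] by simp
  show "\<bar>\<phi> (\<lambda>\<omega>. u \<omega> + v \<omega>)\<bar> \<le> \<bar>\<phi> u\<bar> + \<bar>\<phi> v\<bar>" if "u \<in> X" "v \<in> X" for u v
    unfolding add[OF that] by (rule abs_triangle_ineq)
  show "\<bar>\<phi> (\<lambda>\<omega>. a * u \<omega>)\<bar> \<le> (\<bar>a\<bar> + 1) * \<bar>\<phi> u\<bar>" if "u \<in> X" for a u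
    unfolding scale[OF that that] abs_mult by (simp add: distrib_right)
  show "(\<lambda>n. \<bar>\<phi> (ys n)\<bar>) \<longlonglongrightarrow> 0"
    if "\<And>n. ys n \<in> X" "z \<in> X" "\<And>n. AE \<omega> in M. \<bar>ys n \<omega>\<bar> \<le> z \<omega>" "AE \<omega> in M. (\<lambda>n. ys n \<omega>) \<longlonglongrightarrow> 0"
    for ys z
    using order_continuous_functional_tendsto_zero[OF ideal oc that] by (rule tendsto_rabs_zero)
qed (rule ideal)

lemma min_one_abs_add_le: "min 1 \<bar>x + y\<bar> \<le> min 1 \<bar>x\<bar> + min 1 \<bar>y\<bar>" for x y :: real
  using abs_triangle_ineq[of x y] unfolding min_def by auto

lemma min_one_abs_mult_le: "min 1 \<bar>a * x\<bar> \<le> (\<bar>a\<bar> + 1) * min 1 \<bar>x\<bar>" for a x :: real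
proof (cases "\<bar>x\<bar> \<le> 1")
  case True
  have "min 1 \<bar>a * x\<bar> \<le> \<bar>a\<bar> * \<bar>x\<bar>"
    by (simp add: abs_mult)
  also have "\<dots> \<le> (\<bar>a\<bar> + 1) * \<bar>x\<bar>"
    by (simp add: mult_right_mono)
  finally show ?thesis
    using True by (simp add: min_def)
next
  case False
  then show ?thesis
    using abs_ge_zero[of a] by (auto simp: min_def)
qed

lemma (in finite_measure) truncated_L1_tendsto_zero:
  fixes ys :: "nat \<Rightarrow> 'a \<Rightarrow> real"
  assumes [measurable]: "\<And>n. ys n \<in> borel_measurable M" and lim: "AE \<omega> in M. (\<lambda>n. ys n \<omega>) \<longlonglongrightarrow> 0"
  shows "(\<lambda>n. \<integral>\<omega>. min 1 \<bar>ys n \<omega>\<bar> \<partial>M) \<longlonglongrightarrow> 0"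
proof -
  have "(\<lambda>n. \<integral>\<omega>. min 1 \<bar>ys n \<omega>\<bar> \<partial>M) \<longlonglongrightarrow> (\<integral>\<omega>. 0 \<partial>M)"
  proof (rule integral_dominated_convergence[where w = "\<lambda>_. 1"])
    show "AE \<omega> in M. (\<lambda>n. min 1 \<bar>ys n \<omega>\<bar>) \<longlonglongrightarrow> 0"
      using lim
    proof eventually_elim
      case (elim \<omega>)
      then have "(\<lambda>n. min 1 \<bar>ys n \<omega>\<bar>) \<longlonglongrightarrow> min 1 0"
        by (intro tendsto_min tendsto_const tendsto_rabs_zero)
      then show ?case
        by simp
    qed
  qed auto
  then show ?thesis
    by simp
qed

lemma (in finite_measure) ideal_gauges_truncated_L1:
  assumes ideal: "is_ideal_L0 M X"
  shows "ideal_gauges M X {()} (\<lambda>_ x. \<integral>\<omega>. min 1 \<bar>x \<omega>\<bar> \<partial>M)"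
proof
  have integrable: "integrable M (\<lambda>\<omega>. min 1 \<bar>x \<omega>\<bar>)" if "x \<in> borel_measurable M" for x :: "'a \<Rightarrow> real"
    using that by (intro integrable_const_bound[where B = 1]) auto
  show "(\<integral>\<omega>. min 1 \<bar>u \<omega> + v \<omega>\<bar> \<partial>M) \<le> (\<integral>\<omega>. min 1 \<bar>u \<omega>\<bar> \<partial>M) + (\<integral>\<omega>. min 1 \<bar>v \<omega>\<bar> \<partial>M)"
    if "u \<in> X" "v \<in> X" for u v
  proof -
    have [measurable]: "u \<in> borel_measurable M" "v \<in> borel_measurable M"
      using that ideal_measurable[OF ideal] by auto
    have "(\<integral>\<omega>. min 1 \<bar>u \<omega> + v \<omega>\<bar> \<partial>M) \<le> (\<integral>\<omega>. min 1 \<bar>u \<omega>\<bar> + min 1 \<bar>v \<omega>\<bar> \<partial>M)"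
      using min_one_abs_add_le by (intro integral_mono integrable Bochner_Integration.integrable_add) auto
    also have "\<dots> = (\<integral>\<omega>. min 1 \<bar>u \<omega>\<bar> \<partial>M) + (\<integral>\<omega>. min 1 \<bar>v \<omega>\<bar> \<partial>M)"
      by (intro Bochner_Integration.integral_add integrable) auto
    finally show ?thesis .
  qed
  show "(\<integral>\<omega>. min 1 \<bar>a * u \<omega>\<bar> \<partial>M) \<le> (\<bar>a\<bar> + 1) * (\<integral>\<omega>. min 1 \<bar>u \<omega>\<bar> \<partial>M)"
    if "u \<in> X" for a u
  proof -
    have [measurable]: "u \<in> borel_measurable M"
      using that ideal_measurable[OF ideal] by auto
    have "(\<integral>\<omega>. min 1 \<bar>a * u \<omega>\<bar> \<partial>M) \<le> (\<integral>\<omega>. (\<bar>a\<bar> + 1) * min 1 \<bar>u \<omega>\<bar> \<partial>M)"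
      using min_one_abs_mult_le by (intro integral_mono integrable integrable_mult_right) auto
    then show ?thesis
      by simp
  qed
  show "(\<lambda>n. \<integral>\<omega>. min 1 \<bar>ys n \<omega>\<bar> \<partial>M) \<longlonglongrightarrow> 0"
    if "\<And>n. ys n \<in> X" "AE \<omega> in M. (\<lambda>n. ys n \<omega>) \<longlonglongrightarrow> 0" for ys
    using that ideal_measurable[OF ideal] by (intro truncated_L1_tendsto_zero) auto
qed (use ideal in simp_all)

lemma weak_closure_of_O_span:
  assumes ideal: "is_ideal_L0 M X" and const: "\<forall>c. (\<lambda>_. c) \<in> X" and f: "f \<in> X"
    and sig: "sigma_gen_completed M f = sets M"
  shows "weak_topology_n M X closure_of O_span f = X"
proof -
  interpret weak: ideal_gauges M X "order_dual_n M X" "\<lambda>\<phi> x. \<bar>\<phi> x\<bar>"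
    using ideal by (rule ideal_gauges_order_dual)
  have O_span_X: "O_span f \<subseteq> X"
    by (rule O_span_subset_ideal[OF ideal const f])
  show ?thesis
    unfolding weak_topology_n_def
  proof (rule closure_of_functionals_topology_eq[OF O_span_X])
    fix g \<Phi> and e :: real assume g: "g \<in> X" and \<Phi>: "finite \<Phi>" "\<Phi> \<subseteq> order_dual_n M X" and "0 < e"
    with weak.ideal_subset_gauge_closure_O_span[OF const f sig]
    obtain u where u: "u \<in> O_span f" "\<forall>\<phi>\<in>\<Phi>. \<bar>\<phi> (\<lambda>\<omega>. u \<omega> - g \<omega>)\<bar> < e"
      using weak.gauge_closureD by blast
    have "\<bar>\<phi> u - \<phi> g\<bar> < e" if "\<phi> \<in> \<Phi>" for \<phi>
    proof -
      have "linear_functional_on M X \<phi>"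
        using that \<Phi>(2) by (auto simp: order_dual_n_def order_continuous_functional_def)
      with u(2) that O_span_X u(1) g show ?thesis
        using linear_functional_diff[OF ideal] by fastforce
    qed
    with u(1) show "\<exists>u\<in>O_span f. \<forall>\<phi>\<in>\<Phi>. \<bar>\<phi> u - \<phi> g\<bar> < e"
      by blast
  qed
qed

lemma (in finite_measure) AE_limit_of_O_span:
  assumes ideal: "is_ideal_L0 M X" and const: "\<forall>c. (\<lambda>_. c) \<in> X" and f: "f \<in> X"
    and sig: "sigma_gen_completed M f = sets M" and g: "g \<in> X"
  shows "\<exists>gn. (\<forall>n. gn n \<in> O_span f) \<and> (AE \<omega> in M. (\<lambda>n. gn n \<omega>) \<longlonglongrightarrow> g \<omega>)"
proof -
  interpret in_measure: ideal_gauges M X "{()}" "\<lambda>_ x. \<integral>\<omega>. min 1 \<bar>x \<omega>\<bar> \<partial>M"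
    using ideal by (rule ideal_gauges_truncated_L1)
  have "g \<in> in_measure.gauge_closure (O_span f)"
    using in_measure.ideal_subset_gauge_closure_O_span[OF const f sig] g by blast
  note approx = in_measure.gauge_closureD[OF this, of "{()}"]
  show ?thesis
  proof (rule AE_convergent_sequence_if_truncated_L1_dense)
    show "O_span f \<subseteq> borel_measurable M"
      using O_span_subset_ideal[OF ideal const f] ideal_measurable[OF ideal] by blast
    show "g \<in> borel_measurable M"
      using ideal_measurable[OF ideal g] .
    show "\<exists>u\<in>O_span f. (\<integral>\<omega>. min 1 \<bar>u \<omega> - g \<omega>\<bar> \<partial>M) < e" if "0 < e" for e
      using approx[OF _ _ that] by simp
  qed
qed

theorem corollary3p2:
  fixes M :: "'a measure" and X :: "('a \<Rightarrow> real) set" and f :: "'a \<Rightarrow> real"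
  assumes "prob_space M"
    and "is_ideal_L0 M X"
    and "\<forall>c::real. (\<lambda>_. c) \<in> X"
    and "\<exists>\<phi>. order_continuous_functional M X \<phi> \<and> strictly_positive_functional M X \<phi>"
    and "f \<in> X"
    and "AE \<omega> in M. 0 \<le> f \<omega>"
    and "sigma_gen_completed M f = sets M"
  shows "(weak_topology_n M X) closure_of (O_span f) = X \<and>
         (\<forall>g\<in>X. \<exists>gn :: nat \<Rightarrow> 'a \<Rightarrow> real. (\<forall>n. gn n \<in> O_span f) \<and>
           (AE \<omega> in M. (\<lambda>n. gn n \<omega>) \<longlonglongrightarrow> g \<omega>))"
proof -
  interpret prob_space M
    by (fact assms(1))
  show ?thesis
    using weak_closure_of_O_span[OF assms(2,3,5,7)] AE_limit_of_O_span[OF assms(2,3,5,7)] by blast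
qed

end
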